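(* Let $f\in\mathbb Z[x]$ be an irreducible polynomial and $\beta$ a root of $f$, and let $P$ be a non-archimedean prime divisor of $\mathbb Q(\beta)$ which is stable. If $g\in O_P[x)$ satisfies $e_P(g)=0$, then $g$ is divisible by $\beta-x$ in $O_P[x)$, i.e. $g=(\beta-x)h$ for some $h\in O_P[x)$.
   Context: A prime divisor $P$ of $\mathbb Q(\beta)$ (an equivalence class of nontrivial absolute values) is stable if $\beta^n\to0$ as $n\to\infty$ in the $P$-topology. $O_P\subset\mathbb Q(\beta)$ is the ring of elements of $P$-absolute value at most $1$, and $K_P$ the completion of $\mathbb Q(\beta)$ at $P$. $O_P[x)$ denotes formal series $\sum_{n\ge m}a_nx^n$, $a_n\in O_P$. For stable $P$, $e_P:O_P[x)\to K_P$ is the evaluation map $\sum a_nx^n\mapsto\sum a_n\beta^n$ (convergent in $K_P$). *)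

theory Defs
  imports "HOL-Analysis.Analysis" "HOL-Computational_Algebra.Polynomial"
    "HOL-Computational_Algebra.Formal_Laurent_Series"
begin

definition abs_value :: "('a::field \<Rightarrow> real) \<Rightarrow> bool" where
  "abs_value v \<longleftrightarrow>
     (\<forall>x. v x \<ge> 0) \<and> (\<forall>x. v x = 0 \<longleftrightarrow> x = 0) \<and>
     (\<forall>x y. v (x * y) = v x * v y) \<and> (\<forall>x y. v (x + y) \<le> v x + v y)"

definition nontrivial_abs_value :: "('a::field \<Rightarrow> real) \<Rightarrow> bool" where
  "nontrivial_abs_value v \<longleftrightarrow> (\<exists>x. x \<noteq> 0 \<and> v x \<noteq> 1)"

definition nonarchimedean :: "('a::field \<Rightarrow> real) \<Rightarrow> bool" where
  "nonarchimedean v \<longleftrightarrow> (\<forall>x y. v (x + y) \<le> max (v x) (v y))"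

definition stable :: "('a::field \<Rightarrow> real) \<Rightarrow> 'a \<Rightarrow> bool" where
  "stable v \<beta> \<longleftrightarrow> (\<lambda>n. v (\<beta> ^ n)) \<longlonglongrightarrow> 0"

definition O_P :: "('a::field \<Rightarrow> real) \<Rightarrow> 'a set" where
  "O_P v = {x. v x \<le> 1}"

text \<open>O_P[x): formal Laurent series (finitely many negative terms) with coefficients in O_P.\<close>
definition OP_laurent :: "('a::field \<Rightarrow> real) \<Rightarrow> 'a fls set" where
  "OP_laurent v = {g. \<forall>n. fls_nth g n \<in> O_P v}"

definition eval_partial :: "'a::field fls \<Rightarrow> 'a \<Rightarrow> nat \<Rightarrow> 'a" where
  "eval_partial g \<beta> N = (\<Sum>n\<in>{fls_subdegree g..int N}. fls_nth g n * \<beta> powi n)"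

text \<open>e_P(g) = 0 in the completion K_P: the partial sums converge to 0 w.r.t. v
  (the absolute value of K_P extends v and K_P contains Q(beta) densely).\<close>
definition eval_zero :: "('a::field \<Rightarrow> real) \<Rightarrow> 'a \<Rightarrow> 'a fls \<Rightarrow> bool" where
  "eval_zero v \<beta> g \<longleftrightarrow> (\<lambda>N. v (eval_partial g \<beta> N)) \<longlonglongrightarrow> 0"

end

theory Submission
  imports Defs
begin

text \<open>Dividing g = sum a_k X^k formally by \<beta> - X gives the quotient h with coefficients
  h_n = \<beta>^-(n+1) P_n, where P_n = sum_(k \<le> n) a_k \<beta>^k are the partial sums of e_P(g).
  Stability forces |\<beta>| < 1, so by the ultrametric inequality each tail sum_(k > n) a_k \<beta>^k
  has absolute value at most |\<beta>|^(n+1). Since e_P(g) = 0, P_n is minus such a tail, whence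
  |h_n| \<le> 1. Only a non-archimedean absolute value on a field is used.\<close>

lemma abs_value_zero: "abs_value v \<Longrightarrow> v 0 = 0"
  by (simp add: abs_value_def)

lemma abs_value_nonneg: "abs_value v \<Longrightarrow> v x \<ge> 0"
  by (simp add: abs_value_def)

lemma abs_value_eq_0_iff: "abs_value v \<Longrightarrow> v x = 0 \<longleftrightarrow> x = 0"
  by (simp add: abs_value_def)

lemma abs_value_mult: "abs_value v \<Longrightarrow> v (x * y) = v x * v y"
  by (simp add: abs_value_def)

lemma abs_value_pos: "abs_value v \<Longrightarrow> x \<noteq> 0 \<Longrightarrow> v x > 0"
  by (metis abs_value_nonneg abs_value_eq_0_iff less_eq_real_def)

lemma abs_value_one:
  assumes "abs_value v"
  shows "v 1 = 1"
proof -
  have "v 1 * v 1 = v 1 * 1"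
    using abs_value_mult[OF assms, of 1 1] by simp
  moreover have "v 1 \<noteq> 0"
    using abs_value_pos[OF assms, of 1] by simp
  ultimately show ?thesis
    by (metis mult_left_cancel)
qed

lemma abs_value_minus:
  assumes "abs_value v"
  shows "v (- x) = v x"
proof -
  have "v (-1) * v (-1) = 1"
    using abs_value_mult[OF assms, of "-1" "-1"] abs_value_one[OF assms] by simp
  then have "v (-1) = 1"
    using abs_value_nonneg[OF assms, of "-1"] by (metis abs_of_nonneg abs_square_eq_1 power2_eq_square)
  then show ?thesis
    using abs_value_mult[OF assms, of "-1" x] by simp
qed

lemma abs_value_inverse:
  assumes "abs_value v"
  shows "v (inverse x) = inverse (v x)"
proof (cases "x = 0")
  case False
  then have "v x * v (inverse x) = 1"
    using abs_value_mult[OF assms, of x "inverse x"] abs_value_one[OF assms] by simp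
  then show ?thesis
    by (metis inverse_unique)
qed (simp add: abs_value_zero[OF assms])

lemma abs_value_power: "abs_value v \<Longrightarrow> v (x ^ n) = v x ^ n"
  by (induction n) (simp_all add: abs_value_one abs_value_mult)

lemma abs_value_power_int: "abs_value v \<Longrightarrow> v (x powi k) = v x powi k"
  by (simp add: power_int_def abs_value_power abs_value_inverse)

lemma nonarchimedean_sum_le:
  assumes "abs_value v" "nonarchimedean v" "finite A" "\<And>k. k \<in> A \<Longrightarrow> v (f k) \<le> B" "0 \<le> B"
  shows "v (sum f A) \<le> B"
  using assms(3,4)
proof (induction A rule: finite_induct)
  case empty
  then show ?case
    using abs_value_zero[OF assms(1)] assms(5) by simp
next
  case (insert x F)
  have "v (sum f (insert x F)) \<le> max (v (f x)) (v (sum f F))"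
    using insert.hyps assms(2) by (simp add: nonarchimedean_def)
  moreover have "v (f x) \<le> B" "v (sum f F) \<le> B"
    using insert by auto
  ultimately show ?case
    by (simp add: order_trans)
qed

lemma stable_imp_abs_value_less_1:
  assumes "abs_value v" "stable v \<beta>"
  shows "v \<beta> < 1"
proof (rule ccontr)
  assume "\<not> v \<beta> < 1"
  then have "\<forall>n. 1 \<le> v (\<beta> ^ n)"
    by (simp add: abs_value_power[OF assms(1)] one_le_power)
  then show False
    using assms(2) LIMSEQ_le_const[of _ 0 1] by (force simp: stable_def)
qed

definition fls_partial_eval :: "'a::field fls \<Rightarrow> 'a \<Rightarrow> int \<Rightarrow> 'a" where
  "fls_partial_eval g \<beta> n = (\<Sum>k\<in>{fls_subdegree g..n}. fls_nth g k * \<beta> powi k)"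

lemma fls_partial_eval_below_subdegree: "n < fls_subdegree g \<Longrightarrow> fls_partial_eval g \<beta> n = 0"
  by (simp add: fls_partial_eval_def)

lemma fls_partial_eval_step:
  "fls_partial_eval g \<beta> n = fls_partial_eval g \<beta> (n - 1) + fls_nth g n * \<beta> powi n"
proof (cases "n < fls_subdegree g")
  case False
  then have "{fls_subdegree g..n} = insert n {fls_subdegree g..n - 1}"
    by auto
  then show ?thesis
    by (simp add: fls_partial_eval_def add.commute)
qed (simp add: fls_partial_eval_def fls_eq0_below_subdegree)

definition fls_linear_quotient :: "'a::field \<Rightarrow> 'a fls \<Rightarrow> 'a fls" where
  "fls_linear_quotient \<beta> g = Abs_fls (\<lambda>n. \<beta> powi (-(n + 1)) * fls_partial_eval g \<beta> n)"

lemma fls_nth_linear_quotient: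
  "fls_nth (fls_linear_quotient \<beta> g) n = \<beta> powi (-(n + 1)) * fls_partial_eval g \<beta> n"
  unfolding fls_linear_quotient_def
  by (rule nth_Abs_fls_lower_bound[of "fls_subdegree g"]) (simp add: fls_partial_eval_below_subdegree)

lemma fls_linear_times_linear_quotient:
  fixes \<beta> :: "'a::field"
  assumes "\<beta> \<noteq> 0"
  shows "(fls_const \<beta> - fls_X) * fls_linear_quotient \<beta> g = g"
proof (rule fls_eqI)
  fix n
  let ?P = "fls_partial_eval g \<beta>"
  have "\<beta> powi (-(n + 1)) = \<beta> powi (-n) * \<beta> powi (-1)"
    using assms by (subst power_int_add[symmetric]) auto
  then have "\<beta> * \<beta> powi (-(n + 1)) = \<beta> powi (-n)"
    using assms by (simp add: power_int_minus)
  have "\<beta> powi (-n) * \<beta> powi n = 1"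
    using assms by (simp add: power_int_minus)
  have "\<beta> * (\<beta> powi (-(n + 1)) * ?P n) - \<beta> powi (-n) * ?P (n - 1)
      = \<beta> powi (-n) * (?P n - ?P (n - 1))"
    unfolding mult.assoc[symmetric] \<open>\<beta> * \<beta> powi (-(n + 1)) = \<beta> powi (-n)\<close>
    by (simp add: right_diff_distrib)
  also have "\<dots> = fls_nth g n * (\<beta> powi (-n) * \<beta> powi n)"
    by (simp add: fls_partial_eval_step[of g \<beta> n] algebra_simps)
  also have "\<dots> = fls_nth g n"
    using \<open>\<beta> powi (-n) * \<beta> powi n = 1\<close> by simp
  finally have "\<beta> * (\<beta> powi (-(n + 1)) * ?P n) - \<beta> powi (-n) * ?P (n - 1) = fls_nth g n" .
  then show "fls_nth ((fls_const \<beta> - fls_X) * fls_linear_quotient \<beta> g) n = fls_nth g n"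
    by (simp add: algebra_simps fls_X_times_conv_shift fls_nth_linear_quotient)
qed

lemma abs_value_partial_eval_le:
  assumes "abs_value v" "nonarchimedean v" "\<beta> \<noteq> 0" "v \<beta> < 1"
    and "g \<in> OP_laurent v" "eval_zero v \<beta> g"
  shows "v (fls_partial_eval g \<beta> n) \<le> v \<beta> powi (n + 1)"
proof (cases "n < fls_subdegree g")
  case True
  then show ?thesis
    using assms(1) by (simp add: fls_partial_eval_below_subdegree abs_value_zero abs_value_nonneg)
next
  case False
  define \<epsilon> where "\<epsilon> = v \<beta> powi (n + 1)"
  have "v \<beta> > 0"
    using abs_value_pos assms(1,3) .
  then have "\<epsilon> > 0"
    by (simp add: \<epsilon>_def)
  then obtain N0 where N0: "\<And>N. N \<ge> N0 \<Longrightarrow> v (eval_partial g \<beta> N) < \<epsilon>"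
    using assms(6) unfolding eval_zero_def by (metis eventually_sequentially order_tendstoD(2))
  define N where "N = max N0 (nat n)"
  define T where "T = (\<Sum>k\<in>{n + 1..int N}. fls_nth g k * \<beta> powi k)"
  have "{fls_subdegree g..int N} = {fls_subdegree g..n} \<union> {n + 1..int N}"
    using False by (auto simp: N_def)
  then have eval_split: "eval_partial g \<beta> N = fls_partial_eval g \<beta> n + T"
    by (simp add: eval_partial_def fls_partial_eval_def T_def sum.union_disjoint)
  have "v T \<le> \<epsilon>"
    unfolding T_def
  proof (rule nonarchimedean_sum_le[OF assms(1,2)])
    fix k assume k: "k \<in> {n + 1..int N}"
    have "v (fls_nth g k) \<le> 1"
      using assms(5) by (simp add: OP_laurent_def O_P_def)
    moreover have "v \<beta> powi k \<le> \<epsilon>"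
      unfolding \<epsilon>_def using k \<open>v \<beta> > 0\<close> assms(4) by (intro power_int_decreasing) auto
    ultimately have "v (fls_nth g k) * v \<beta> powi k \<le> 1 * \<epsilon>"
      using \<open>v \<beta> > 0\<close> by (intro mult_mono) auto
    then show "v (fls_nth g k * \<beta> powi k) \<le> \<epsilon>"
      by (simp add: abs_value_mult[OF assms(1)] abs_value_power_int[OF assms(1)])
  qed (use \<open>\<epsilon> > 0\<close> in auto)
  have "v (fls_partial_eval g \<beta> n) \<le> max (v (eval_partial g \<beta> N)) (v (- T))"
    using eval_split assms(2) unfolding nonarchimedean_def by (metis add_diff_cancel diff_conv_add_uminus)
  also have "\<dots> \<le> \<epsilon>"
    using N0[of N] \<open>v T \<le> \<epsilon>\<close> abs_value_minus[OF assms(1)] by (simp add: N_def)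
  finally show ?thesis
    by (simp add: \<epsilon>_def)
qed

lemma fls_linear_quotient_in_OP_laurent:
  assumes "abs_value v" "nonarchimedean v" "\<beta> \<noteq> 0" "v \<beta> < 1"
    and "g \<in> OP_laurent v" "eval_zero v \<beta> g"
  shows "fls_linear_quotient \<beta> g \<in> OP_laurent v"
  unfolding OP_laurent_def O_P_def
proof (intro CollectI allI)
  fix n
  have "v \<beta> > 0"
    using abs_value_pos assms(1,3) .
  have "v (fls_nth (fls_linear_quotient \<beta> g) n) = v \<beta> powi (-(n + 1)) * v (fls_partial_eval g \<beta> n)"
    by (simp add: fls_nth_linear_quotient abs_value_mult[OF assms(1)] abs_value_power_int[OF assms(1)])
  also have "\<dots> \<le> v \<beta> powi (-(n + 1)) * v \<beta> powi (n + 1)"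
    using abs_value_partial_eval_le[OF assms] \<open>v \<beta> > 0\<close> by (intro mult_left_mono) auto
  also have "\<dots> = 1"
    using \<open>v \<beta> > 0\<close> by (subst power_int_add[symmetric]) auto
  finally show "v (fls_nth (fls_linear_quotient \<beta> g) n) \<le> 1" .
qed

theorem mainTheorem8:
  fixes f :: "int poly" and \<beta> :: "'a::field_char_0" and v :: "'a \<Rightarrow> real"
    and g :: "'a fls"
  assumes "irreducible f"
    and "poly (map_poly of_int f) \<beta> = 0"
    and "\<forall>y::'a. \<exists>p::rat poly. y = poly (map_poly of_rat p) \<beta>"
    and "abs_value v" and "nontrivial_abs_value v" and "nonarchimedean v"
    and "stable v \<beta>"
    and "g \<in> OP_laurent v"
    and "eval_zero v \<beta> g"
  shows "\<exists>h \<in> OP_laurent v. g = (fls_const \<beta> - fls_X) * h"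
proof (cases "\<beta> = 0")
  case True
  \<comment> \<open>Then \<open>\<beta> - X = -X\<close> is a unit of the Laurent series ring.\<close>
  have "- fls_shift 1 g \<in> OP_laurent v"
    using assms(8) abs_value_minus[OF assms(4)] by (simp add: OP_laurent_def O_P_def)
  moreover have "g = (fls_const \<beta> - fls_X) * - fls_shift 1 g"
    by (simp add: True fls_X_times_conv_shift)
  ultimately show ?thesis
    by blast
next
  case False
  have "v \<beta> < 1"
    using stable_imp_abs_value_less_1 assms(4,7) .
  then show ?thesis
    using fls_linear_quotient_in_OP_laurent fls_linear_times_linear_quotient assms(4,6,8,9) False
    by metis
qed

end
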